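(* Let $S$ be a finite set, let $\mathcal{G}\subseteq 2^S$ be connected, and let $\mathcal{C}_1,\mathcal{C}_2\subseteq\mathcal{G}$. Then $\chi(\mathcal{C}_1)=\chi(\mathcal{C}_2)$ if and only if $\mathcal{C}_1\simeq_{\mathrm{ap}(\mathcal{G})}\mathcal{C}_2$.
   Context: An adjacent pair of $2^S$ is a set $\{X,X\setminus\{x\}\}$ with $X\subseteq S$ and $x\in X$. Let $G_S$ be the undirected graph with vertex set $2^S$ whose edges are the adjacent pairs; $\mathcal{G}\subseteq 2^S$ is connected if it induces a connected subgraph of $G_S$. The allowed adjacent pairs relative to $\mathcal{G}$ are $\mathrm{ap}(\mathcal{G})=\{\mathcal{P}\mid\mathcal{P}\text{ an adjacent pair of }2^S,\ \mathcal{P}\subseteq\mathcal{G}\}$. For a set $A$ of adjacent pairs and configurations $\mathcal{C},\mathcal{C}'\subseteq 2^S$, write $\mathcal{C}\to\mathcal{C}'$ if there is $\mathcal{P}\in A$ with $\mathcal{P}\cap\mathcal{C}=\emptyset$ and $\mathcal{C}'=\mathcal{C}\cup\mathcal{P}$, or with $\mathcal{P}\subseteq\mathcal{C}$ and $\mathcal{C}'=\mathcal{C}\setminus\mathcal{P}$; $\simeq_A$ is the reflexive transitive closure of this (symmetric) relation. For a family $\mathcal{D}$ of finite sets, $\chi(\mathcal{D})=\sum_{Y\in\mathcal{D}}(-1)^{|Y|}$. *)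

theory Defs
  imports Main
begin

definition adjacent_pair :: "'a set \<Rightarrow> 'a set set \<Rightarrow> bool" where
  "adjacent_pair S P \<longleftrightarrow> (\<exists>X x. X \<subseteq> S \<and> x \<in> X \<and> P = {X, X - {x}})"

definition adj :: "'a set \<Rightarrow> 'a set \<Rightarrow> 'a set \<Rightarrow> bool" where
  "adj S Y Z \<longleftrightarrow> adjacent_pair S {Y, Z}"

definition connected_family :: "'a set \<Rightarrow> 'a set set \<Rightarrow> bool" where
  "connected_family S G \<longleftrightarrow> G \<subseteq> Pow S \<and>
     (\<forall>Y\<in>G. \<forall>Z\<in>G. (\<lambda>U V. U \<in> G \<and> V \<in> G \<and> adj S U V)\<^sup>*\<^sup>* Y Z)"

definition ap :: "'a set \<Rightarrow> 'a set set \<Rightarrow> 'a set set set" where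
  "ap S G = {P. adjacent_pair S P \<and> P \<subseteq> G}"

definition move :: "'a set set set \<Rightarrow> 'a set set \<Rightarrow> 'a set set \<Rightarrow> bool" where
  "move A C C' \<longleftrightarrow> (\<exists>P\<in>A. (P \<inter> C = {} \<and> C' = C \<union> P) \<or> (P \<subseteq> C \<and> C' = C - P))"

definition equiv_moves :: "'a set set set \<Rightarrow> 'a set set \<Rightarrow> 'a set set \<Rightarrow> bool" where
  "equiv_moves A = (move A)\<^sup>*\<^sup>*"

definition euler_char :: "'a set set \<Rightarrow> int" where
  "euler_char D = (\<Sum>Y\<in>D. (-1) ^ card Y)"

end

theory Submission
  imports Defs
begin

text \<open>Every allowed pair consists of two sets of opposite parity, so a move never changes \<open>\<chi>\<close>.
  Conversely, along a path \<open>U = W\<^sub>0, \<dots>, W\<^sub>n = V\<close> in \<open>\<G>\<close> one can toggle the two end points \<open>U\<close>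
  and \<open>V\<close> of a configuration whenever this toggle preserves \<open>\<chi>\<close>, by toggling the edges of
  the path one at a time.  If \<open>\<chi>(\<C>\<^sub>1) = \<chi>(\<C>\<^sub>2)\<close> and \<open>\<C>\<^sub>1 \<noteq> \<C>\<^sub>2\<close>, the signed contributions of the
  members of the symmetric difference sum to zero, so two of them have opposite signs; toggling
  these two preserves \<open>\<chi>\<close> and shrinks the symmetric difference.\<close>

lemma adjacent_pair_parity:
  assumes "finite S" "adjacent_pair S P"
  obtains U V where "P = {U, V}" "even (card U) \<noteq> even (card V)"
proof -
  obtain X x where X: "X \<subseteq> S" "x \<in> X" "P = {X, X - {x}}"
    using assms(2) unfolding adjacent_pair_def by blast
  have "card X = Suc (card (X - {x}))"
    using card_Suc_Diff1[OF finite_subset[OF X(1) assms(1)] X(2)] by simp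
  then show thesis
    using that X(3) by simp
qed

lemma adj_parity:
  assumes "finite S" "adj S U V"
  shows "even (card U) \<noteq> even (card V)"
proof -
  obtain U' V' where "{U, V} = {U', V'}" "even (card U') \<noteq> even (card V')"
    using adjacent_pair_parity assms unfolding adj_def by metis
  then show ?thesis
    by (auto simp: doubleton_eq_iff)
qed

lemma euler_char_adjacent_pair:
  assumes "finite S" "adjacent_pair S P"
  shows "finite P" "euler_char P = 0"
proof -
  obtain U V where P: "P = {U, V}" and parity: "even (card U) \<noteq> even (card V)"
    using adjacent_pair_parity[OF assms] .
  then have "U \<noteq> V"
    by auto
  with P parity show "finite P" "euler_char P = 0"
    by (auto simp: euler_char_def minus_one_power_iff)
qed

text \<open>No finiteness of \<open>C\<close> is needed: if \<open>C\<close> is infinite, both sides are \<open>0\<close> by the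
  convention for infinite sums.\<close>

lemma euler_char_union_null:
  assumes "finite P" "euler_char P = 0" "P \<inter> C = {}"
  shows "euler_char (C \<union> P) = euler_char C"
proof (cases "finite C")
  case True
  have "C \<inter> P = {}"
    using assms(3) by blast
  with True assms(1,2) show ?thesis
    unfolding euler_char_def by (simp add: sum.union_disjoint)
next
  case False
  then show ?thesis
    by (simp add: euler_char_def)
qed

lemma euler_char_move:
  assumes "finite S" "\<forall>P\<in>A. adjacent_pair S P" "move A C C'"
  shows "euler_char C' = euler_char C"
proof -
  obtain P where P: "P \<in> A" "(P \<inter> C = {} \<and> C' = C \<union> P) \<or> (P \<subseteq> C \<and> C' = C - P)"
    using assms(3) unfolding move_def by blast
  have "finite P" "euler_char P = 0"
    using euler_char_adjacent_pair assms(1,2) P(1) by blast+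
  note union = euler_char_union_null[OF this]
  from P(2) show ?thesis
  proof
    assume "P \<inter> C = {} \<and> C' = C \<union> P"
    then show ?thesis
      using union by simp
  next
    assume "P \<subseteq> C \<and> C' = C - P"
    then have "C = C' \<union> P" "P \<inter> C' = {}"
      by auto
    then show ?thesis
      using union by simp
  qed
qed

lemma euler_char_equiv_moves:
  assumes "finite S" "\<forall>P\<in>A. adjacent_pair S P" "equiv_moves A C C'"
  shows "euler_char C' = euler_char C"
  using assms(3) unfolding equiv_moves_def
  by (induction rule: rtranclp_induct) (simp_all add: euler_char_move[OF assms(1,2)])

lemma ap_adjacent_pair: "\<forall>P\<in>ap S G. adjacent_pair S P"
  by (simp add: ap_def)

lemma equiv_moves_toggle_pair:
  assumes "P \<in> A" "P \<subseteq> C \<or> P \<inter> C = {}"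
  shows "equiv_moves A C (sym_diff C P)"
proof -
  have "move A C (sym_diff C P)"
    unfolding move_def using assms by (intro bexI[OF _ assms(1)]) auto
  then show ?thesis
    unfolding equiv_moves_def by blast
qed

text \<open>The hypothesis on \<open>C\<close> says exactly that toggling \<open>U\<close> and \<open>V\<close> preserves \<open>\<chi>\<close>; it forces
  \<open>U \<noteq> V\<close>.  In the induction step, with last edge \<open>W V\<close>, one first toggles the edge if \<open>W\<close> and
  \<open>V\<close> are both in or both out of \<open>C\<close>, and otherwise first toggles \<open>U\<close> and \<open>W\<close>.\<close>

lemma equiv_moves_toggle_path_ends:
  assumes "finite S"
    and "(\<lambda>U V. U \<in> G \<and> V \<in> G \<and> adj S U V)\<^sup>*\<^sup>* U V"
    and "(U \<in> C \<longleftrightarrow> V \<in> C) \<longleftrightarrow> even (card U) \<noteq> even (card V)"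
  shows "equiv_moves (ap S G) C (sym_diff C {U, V})"
  using assms(2,3)
proof (induction arbitrary: C rule: rtranclp_induct)
  case base
  then show ?case by simp
next
  case (step W V)
  have edge: "{W, V} \<in> ap S G"
    using step.hyps(2) unfolding ap_def adj_def by blast
  have parity_WV: "even (card W) \<noteq> even (card V)"
    using step.hyps(2) adj_parity[OF assms(1)] by blast
  have "U \<noteq> V" "W \<noteq> V"
    using step.prems parity_WV by auto
  show ?case
  proof (cases "W \<in> C \<longleftrightarrow> V \<in> C")
    case edge_toggle: True
    let ?C' = "sym_diff C {W, V}"
    have first: "equiv_moves (ap S G) C ?C'"
      using equiv_moves_toggle_pair[OF edge] edge_toggle by blast
    show ?thesis
    proof (cases "U = W")
      case True
      with first show ?thesis by simp
    next
      case False
      have "(U \<in> ?C' \<longleftrightarrow> W \<in> ?C') \<longleftrightarrow> (U \<in> C \<longleftrightarrow> W \<notin> C)"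
        using False \<open>U \<noteq> V\<close> by blast
      then have "equiv_moves (ap S G) ?C' (sym_diff ?C' {U, W})"
        using step.IH[of ?C'] step.prems parity_WV edge_toggle by blast
      moreover have "sym_diff ?C' {U, W} = sym_diff C {U, V}"
        using \<open>U \<noteq> V\<close> \<open>W \<noteq> V\<close> False by blast
      ultimately show ?thesis
        using first unfolding equiv_moves_def by simp
    qed
  next
    case no_edge_toggle: False
    let ?C' = "sym_diff C {U, W}"
    have first: "equiv_moves (ap S G) C ?C'"
      using step.IH[of C] step.prems parity_WV no_edge_toggle by blast
    have "U \<noteq> W"
      using step.prems no_edge_toggle parity_WV by blast
    then have "{W, V} \<subseteq> ?C' \<or> {W, V} \<inter> ?C' = {}"
      using no_edge_toggle \<open>U \<noteq> V\<close> by blast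
    then have "equiv_moves (ap S G) ?C' (sym_diff ?C' {W, V})"
      by (rule equiv_moves_toggle_pair[OF edge])
    moreover have "sym_diff ?C' {W, V} = sym_diff C {U, V}"
      using \<open>U \<noteq> V\<close> \<open>W \<noteq> V\<close> \<open>U \<noteq> W\<close> by blast
    ultimately show ?thesis
      using first unfolding equiv_moves_def by simp
  qed
qed

lemma sum_eq_0_nonconstant:
  fixes f :: "'a \<Rightarrow> 'b :: {idom, ring_char_0}"
  assumes "finite D" "D \<noteq> {}" "\<forall>x\<in>D. f x \<noteq> 0" "sum f D = 0"
  obtains x y where "x \<in> D" "y \<in> D" "f x \<noteq> f y"
proof -
  obtain x where x: "x \<in> D"
    using assms(2) by blast
  have "\<exists>y\<in>D. f x \<noteq> f y"
  proof (rule ccontr)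
    assume "\<not> ?thesis"
    then have "sum f D = (\<Sum>_\<in>D. f x)"
      by (intro sum.cong) auto
    then have "sum f D = of_nat (card D) * f x"
      by simp
    with assms x show False
      by simp
  qed
  with x that show thesis by blast
qed

lemma euler_char_diff_sym_diff:
  assumes "finite C1" "finite C2"
  shows "euler_char C1 - euler_char C2 =
    (\<Sum>Y\<in>sym_diff C1 C2. (if Y \<in> C1 then 1 else -1) * (-1) ^ card Y)"
proof -
  let ?s = "\<lambda>Y. (-1::int) ^ card Y"
  have "euler_char C1 - euler_char C2 = sum ?s (C1 - C2) - sum ?s (C2 - C1)"
    unfolding euler_char_def
    using sum.Int_Diff[OF assms(1), of ?s C2] sum.Int_Diff[OF assms(2), of ?s C1]
    by (simp add: Int_commute)
  also have "\<dots> = (\<Sum>Y\<in>sym_diff C1 C2. (if Y \<in> C1 then 1 else -1) * ?s Y)"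
    using assms by (simp add: sum.union_disjoint Diff_Int_distrib2 sum_negf)
  finally show ?thesis .
qed

lemma equiv_moves_if_euler_char_eq:
  assumes "finite S" "connected_family S G" "C1 \<subseteq> G" "C2 \<subseteq> G"
    and "euler_char C1 = euler_char C2"
  shows "equiv_moves (ap S G) C1 C2"
  using assms(3,5)
proof (induction "card (sym_diff C1 C2)" arbitrary: C1 rule: less_induct)
  case less
  have "finite G"
    using assms(1,2) unfolding connected_family_def by (meson finite_Pow_iff finite_subset)
  then have fin: "finite C1" "finite C2"
    using less.prems(1) assms(4) finite_subset by auto
  show ?case
  proof (cases "C1 = C2")
    case True
    then show ?thesis by (simp add: equiv_moves_def)
  next
    case False
    define D where "D = sym_diff C1 C2"
    define f where "f Y = (if Y \<in> C1 then 1 else -1) * (-1::int) ^ card Y" for Y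
    have "finite D" "D \<noteq> {}"
      using fin False unfolding D_def by auto
    moreover have "\<forall>Y\<in>D. f Y \<noteq> 0"
      by (simp add: f_def)
    moreover have "sum f D = 0"
      using euler_char_diff_sym_diff[OF fin] less.prems(2) unfolding D_def f_def by simp
    ultimately obtain U V where UV: "U \<in> D" "V \<in> D" "f U \<noteq> f V"
      by (rule sum_eq_0_nonconstant)
    then have toggle: "(U \<in> C1 \<longleftrightarrow> V \<in> C1) \<longleftrightarrow> even (card U) \<noteq> even (card V)"
      unfolding f_def by (auto simp: minus_one_power_iff split: if_splits)
    have "U \<in> G" "V \<in> G"
      using UV less.prems(1) assms(4) unfolding D_def by blast+
    then have "(\<lambda>U V. U \<in> G \<and> V \<in> G \<and> adj S U V)\<^sup>*\<^sup>* U V"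
      using assms(2) unfolding connected_family_def by blast
    define C1' where "C1' = sym_diff C1 {U, V}"
    have first: "equiv_moves (ap S G) C1 C1'"
      unfolding C1'_def by (rule equiv_moves_toggle_path_ends[OF assms(1) _ toggle]) fact
    have "sym_diff C1' C2 = D - {U} - {V}"
      using UV(1,2) unfolding C1'_def D_def by blast
    then have "card (sym_diff C1' C2) < card (sym_diff C1 C2)"
      using card_Diff2_less[OF \<open>finite D\<close> UV(1,2)] unfolding D_def by simp
    moreover have "C1' \<subseteq> G"
      using less.prems(1) \<open>U \<in> G\<close> \<open>V \<in> G\<close> unfolding C1'_def by blast
    moreover have "euler_char C1' = euler_char C2"
      using euler_char_equiv_moves[OF assms(1) ap_adjacent_pair first] less.prems(2) by simp
    ultimately have "equiv_moves (ap S G) C1' C2"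
      by (rule less.hyps)
    with first show ?thesis
      unfolding equiv_moves_def by simp
  qed
qed

theorem proposition6p7:
  fixes S :: "'a set" and G C1 C2 :: "'a set set"
  assumes "finite S"
    and "G \<subseteq> Pow S"
    and "connected_family S G"
    and "C1 \<subseteq> G" and "C2 \<subseteq> G"
  shows "euler_char C1 = euler_char C2 \<longleftrightarrow> equiv_moves (ap S G) C1 C2"
proof
  assume "euler_char C1 = euler_char C2"
  then show "equiv_moves (ap S G) C1 C2"
    by (rule equiv_moves_if_euler_char_eq[OF assms(1,3-5)])
next
  assume "equiv_moves (ap S G) C1 C2"
  then show "euler_char C1 = euler_char C2"
    using euler_char_equiv_moves[OF assms(1) ap_adjacent_pair] by simp
qed

end
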